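(* Under the density hypotheses below, for every $A>0$ there exist $C>0$ and $m'\in\mathbb{N}$ such that for all $m\ge m'$, every $k\in\mathbb{N}$ with $k\le A m^{5/8}$, every choice of types $\theta_1,\ldots,\theta_k\in\{1,\ldots,r\}$, and every permutation $\varrho=(j_1,\ldots,j_k)$ of $\{1,\ldots,k\}$, if $X_1,\ldots,X_k$ are independent with $X_i$ having density $\hat f_{\theta_i}$ on $I_m$, then $$\Big|\Pr\big(X_{j_1}<X_{j_2}<\cdots<X_{j_k}\big)-\frac{1}{k!}\Big|\le \frac{C\,m^{-1/8}}{k!}.$$
   Context: For $\theta\in\{1,\ldots,r\}$, $f_\theta$ is a probability density with $f_\theta(\mathrm{M})>0$ and $|f_\theta(x)-f_\theta(\mathrm{M})|\le c(x-\mathrm{M})^2$ for $x\in[\mathrm{M}-\varepsilon_1,\mathrm{M}+\varepsilon_1]$, for some $c\ge 0,\varepsilon_1>0$. Let $\varepsilon(m)=m^{-3/8}$, $I_m=[\mathrm{M}-\varepsilon(m),\mathrm{M}+\varepsilon(m)]$, $p_\theta=\int_{I_m}f_\theta$, and define the conditional density $\hat f_\theta(x)=f_\theta(x)/p_\theta$ for $x\in I_m$ (zero outside $I_m$). *)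

theory Defs
  imports "HOL-Probability.Probability"
begin

definition eps :: "nat \<Rightarrow> real" where
  "eps m = real m powr (-3/8)"

definition Iint :: "real \<Rightarrow> nat \<Rightarrow> real set" where
  "Iint M m = {M - eps m .. M + eps m}"

definition pmass :: "(real \<Rightarrow> real) \<Rightarrow> real \<Rightarrow> nat \<Rightarrow> real" where
  "pmass g M m = (LINT x:Iint M m|lborel. g x)"

definition cdens :: "(real \<Rightarrow> real) \<Rightarrow> real \<Rightarrow> nat \<Rightarrow> real \<Rightarrow> real" where
  "cdens g M m x = (if x \<in> Iint M m then g x / pmass g M m else 0)"

definition joint_law :: "(nat \<Rightarrow> real \<Rightarrow> real) \<Rightarrow> real \<Rightarrow> nat \<Rightarrow> nat \<Rightarrow> (nat \<Rightarrow> nat)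
    \<Rightarrow> (nat \<Rightarrow> real) measure" where
  "joint_law f M m k th =
     (\<Pi>\<^sub>M i\<in>{1..k}. density lborel (\<lambda>x. ennreal (cdens (f (th i)) M m x)))"

definition order_prob :: "(nat \<Rightarrow> real \<Rightarrow> real) \<Rightarrow> real \<Rightarrow> nat \<Rightarrow> nat \<Rightarrow> (nat \<Rightarrow> nat)
    \<Rightarrow> (nat \<Rightarrow> nat) \<Rightarrow> real" where
  "order_prob f M m k th \<rho> =
     measure (joint_law f M m k th)
       {x \<in> space (joint_law f M m k th). \<forall>i\<in>{1..<k}. x (\<rho> i) < x (\<rho> (Suc i))}"

end

theory Submission
  imports Defs "HOL-Real_Asymp.Real_Asymp"
begin

text \<open>On \<open>I_m\<close> every \<open>f_\<theta>\<close> differs from \<open>f_\<theta>(M)\<close> by a relative error of at most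
  \<open>\<delta> = c \<epsilon>(m)^2 / min_\<theta> f_\<theta>(M)\<close>, so each conditional density lies between
  \<open>(1 - \<delta>)/(1 + \<delta>)\<close> and \<open>(1 + \<delta>)/(1 - \<delta>)\<close> times the uniform density on \<open>I_m\<close>.
  Comparing the product measures factor by factor, the probability of any prescribed order of
  \<open>X_1, \<dots>, X_k\<close> lies between the \<open>k\<close>-th powers of these factors times the corresponding
  probability \<open>1/k!\<close> for i.i.d. uniform variables, which is computed by integrating out one
  variable at a time. Since \<open>k \<delta> = O(m^(5/8) m^(-3/4)) = O(m^(-1/8))\<close>, both powers are
  \<open>1 + O(m^(-1/8))\<close>.\<close>

lemma sigma_finite_density_lborel:
  fixes g :: "real \<Rightarrow> ennreal"
  assumes "g \<in> borel_measurable borel" "\<And>x. g x < \<infinity>"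
  shows "sigma_finite_measure (density lborel g)"
  using assms
  by (subst sigma_finite_measure.sigma_finite_iff_density_finite'[OF sigma_finite_lborel])
     (auto simp: less_top)

lemma nn_integral_PiM_density_mono:
  fixes g h :: "'i \<Rightarrow> real \<Rightarrow> ennreal" and c d :: ennreal
  assumes "finite I"
    and g: "\<And>i. g i \<in> borel_measurable borel" "\<And>i x. g i x < \<infinity>"
    and h: "\<And>i. h i \<in> borel_measurable borel" "\<And>i x. h i x < \<infinity>"
    and dominated: "\<And>i x. c * g i x \<le> d * h i x"
    and F: "F \<in> borel_measurable (PiM I (\<lambda>i. density lborel (g i)))"
  shows "c ^ card I * (\<integral>\<^sup>+x. F x \<partial>PiM I (\<lambda>i. density lborel (g i)))
       \<le> d ^ card I * (\<integral>\<^sup>+x. F x \<partial>PiM I (\<lambda>i. density lborel (h i)))"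
  using assms(1) F
proof (induction I arbitrary: F rule: finite_induct)
  case empty
  then show ?case by (simp add: PiM_empty)
next
  case (insert i I)
  let ?G = "\<lambda>I. PiM I (\<lambda>i. density lborel (g i))" and ?H = "\<lambda>I. PiM I (\<lambda>i. density lborel (h i))"
  interpret G: product_sigma_finite "\<lambda>i. density lborel (g i)"
    using g by (auto simp: product_sigma_finite_def intro: sigma_finite_density_lborel)
  interpret H: product_sigma_finite "\<lambda>i. density lborel (h i)"
    using h by (auto simp: product_sigma_finite_def intro: sigma_finite_density_lborel)
  interpret GI: finite_product_sigma_finite "\<lambda>i. density lborel (g i)" I
    using insert.hyps by unfold_locales
  interpret HI: finite_product_sigma_finite "\<lambda>i. density lborel (h i)" I
    using insert.hyps by unfold_locales
  note g(1)[measurable] h(1)[measurable]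
  have FG[measurable]: "F \<in> borel_measurable (?G (insert i I))" by (rule insert.prems)
  have [measurable]: "F \<in> borel_measurable (?H (insert i I))"
    using FG by (simp cong: measurable_cong_sets sets_PiM_cong)
  define \<Phi> where "\<Phi> K y = (\<integral>\<^sup>+x. F (x(i := y)) \<partial>K)" for K y
  have [measurable]: "\<Phi> (?G I) \<in> borel_measurable borel"
    unfolding \<Phi>_def by measurable
  have [measurable]: "\<Phi> (?H I) \<in> borel_measurable borel"
    unfolding \<Phi>_def by measurable
  have IH: "c ^ card I * \<Phi> (?G I) y \<le> d ^ card I * \<Phi> (?H I) y" for y
    unfolding \<Phi>_def by (rule insert.IH) measurable
  have "c ^ card (insert i I) * integral\<^sup>N (?G (insert i I)) F
      = (\<integral>\<^sup>+y. g i y * (c * (c ^ card I * \<Phi> (?G I) y)) \<partial>lborel)"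
    using insert.hyps
    by (simp add: G.product_nn_integral_insert_rev nn_integral_density nn_integral_cmult
        \<Phi>_def[symmetric] ac_simps flip: nn_integral_cmult)
  also have "\<dots> \<le> (\<integral>\<^sup>+y. (c * g i y) * (d ^ card I * \<Phi> (?H I) y) \<partial>lborel)"
    using IH by (intro nn_integral_mono) (simp add: mult_left_mono ac_simps)
  also have "\<dots> \<le> (\<integral>\<^sup>+y. (d * h i y) * (d ^ card I * \<Phi> (?H I) y) \<partial>lborel)"
    using dominated by (intro nn_integral_mono mult_right_mono) auto
  also have "\<dots> = d ^ card (insert i I) * integral\<^sup>N (?H (insert i I)) F"
    using insert.hyps
    by (simp add: H.product_nn_integral_insert_rev nn_integral_density nn_integral_cmult
        \<Phi>_def[symmetric] ac_simps flip: nn_integral_cmult)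
  finally show ?case .
qed

lemma emeasure_PiM_density_mono:
  fixes g h :: "'i \<Rightarrow> real \<Rightarrow> ennreal" and c d :: ennreal
  assumes "finite I"
    and g: "\<And>i. i \<in> I \<Longrightarrow> g i \<in> borel_measurable borel" "\<And>i x. i \<in> I \<Longrightarrow> g i x < \<infinity>"
    and h: "\<And>i. i \<in> I \<Longrightarrow> h i \<in> borel_measurable borel" "\<And>i x. i \<in> I \<Longrightarrow> h i x < \<infinity>"
    and dominated: "\<And>i x. i \<in> I \<Longrightarrow> c * g i x \<le> d * h i x"
    and S: "S \<in> sets (PiM I (\<lambda>i. density lborel (g i)))"
  shows "c ^ card I * emeasure (PiM I (\<lambda>i. density lborel (g i))) S
       \<le> d ^ card I * emeasure (PiM I (\<lambda>i. density lborel (h i))) S"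
proof -
  define g' where "g' i = (if i \<in> I then g i else (\<lambda>_. 0))" for i
  define h' where "h' i = (if i \<in> I then h i else (\<lambda>_. 0))" for i
  have G: "PiM I (\<lambda>i. density lborel (g i)) = PiM I (\<lambda>i. density lborel (g' i))"
    and H: "PiM I (\<lambda>i. density lborel (h i)) = PiM I (\<lambda>i. density lborel (h' i))"
    by (auto simp: g'_def h'_def intro!: PiM_cong)
  have "c ^ card I * (\<integral>\<^sup>+x. indicator S x \<partial>PiM I (\<lambda>i. density lborel (g' i)))
      \<le> d ^ card I * (\<integral>\<^sup>+x. indicator S x \<partial>PiM I (\<lambda>i. density lborel (h' i)))"
    using assms S unfolding G by (intro nn_integral_PiM_density_mono) (auto simp: g'_def h'_def)
  moreover have "S \<in> sets (PiM I (\<lambda>i. density lborel (h' i)))"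
    using S unfolding G by (simp cong: sets_PiM_cong)
  ultimately show ?thesis
    using S by (simp add: G H)
qed

definition increasing_chain :: "nat list \<Rightarrow> (real \<Rightarrow> bool) \<Rightarrow> (nat \<Rightarrow> real) set" where
  "increasing_chain xs P =
     {x \<in> PiE (set xs) (\<lambda>_. UNIV). sorted_wrt (<) (map x xs) \<and> (\<forall>i\<in>set xs. P (x i))}"

text \<open>The probability that \<open>n\<close> independent uniform variables on \<open>[L, H]\<close> all exceed \<open>lo\<close>
  and appear in a prescribed order.\<close>
definition uniform_chain_prob :: "real \<Rightarrow> real \<Rightarrow> nat \<Rightarrow> real \<Rightarrow> real" where
  "uniform_chain_prob L H n lo = (max 0 (H - max lo L)) ^ n / ((H - L) ^ n * fact n)"

lemma measurable_component_borel:
  assumes "\<And>i. sets (N i) = sets borel" "i \<in> I"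
  shows "(\<lambda>x. x i) \<in> borel_measurable (PiM I N)"
  using measurable_component_singleton[OF assms(2), of N]
  by (simp cong: measurable_cong_sets add: assms(1))

lemma pred_sorted_map:
  fixes N :: "nat \<Rightarrow> real measure"
  assumes N: "\<And>i. sets (N i) = sets borel" and "set xs \<subseteq> I"
  shows "Measurable.pred (PiM I N) (\<lambda>x. sorted_wrt (<) (map x xs))"
  using assms(2)
proof (induction xs)
  case Nil
  then show ?case by simp
next
  case (Cons j ys)
  have [measurable]: "(\<lambda>x. x i) \<in> borel_measurable (PiM I N)" if "i \<in> set (j # ys)" for i
    using measurable_component_borel[of N, OF N] that Cons.prems by auto
  have [measurable]: "Measurable.pred (PiM I N) (\<lambda>x. sorted_wrt (<) (map x ys))"
    using Cons by simp
  have "Measurable.pred (PiM I N) (\<lambda>x. (\<forall>i\<in>set ys. x j < x i) \<and> sorted_wrt (<) (map x ys))"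
    by measurable
  then show ?case by simp
qed

lemma increasing_chain_sets:
  fixes N :: "nat \<Rightarrow> real measure"
  assumes N: "\<And>i. sets (N i) = sets borel" and P[measurable]: "Measurable.pred borel P"
  shows "increasing_chain xs P \<in> sets (PiM (set xs) N)"
proof -
  have [measurable]: "(\<lambda>x. x i) \<in> borel_measurable (PiM (set xs) N)" if "i \<in> set xs" for i
    using measurable_component_borel[of N, OF N] that by auto
  have [measurable]: "Measurable.pred (PiM (set xs) N) (\<lambda>x. sorted_wrt (<) (map x xs))"
    using pred_sorted_map[OF N] by simp
  have "{x \<in> space (PiM (set xs) N). sorted_wrt (<) (map x xs) \<and> (\<forall>i\<in>set xs. P (x i))}
      \<in> sets (PiM (set xs) N)"
    by measurable
  moreover have "space (PiM (set xs) N) = PiE (set xs) (\<lambda>_. UNIV)"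
    using sets_eq_imp_space_eq[OF N] by (simp add: space_PiM)
  ultimately show ?thesis by (simp add: increasing_chain_def)
qed

lemma fun_upd_in_increasing_chain_Cons:
  assumes "x \<in> PiE (set ys) (\<lambda>_. UNIV)" "j \<notin> set ys"
  shows "x(j := y) \<in> increasing_chain (j # ys) P \<longleftrightarrow>
         P y \<and> x \<in> increasing_chain ys (\<lambda>z. P z \<and> y < z)"
proof -
  have "map (x(j := y)) ys = map x ys" "\<forall>i\<in>set ys. (x(j := y)) i = x i"
    using assms(2) by auto
  moreover have "x(j := y) \<in> PiE (insert j (set ys)) (\<lambda>_. UNIV)"
    using assms(1) by (auto simp: PiE_def extensional_def)
  ultimately show ?thesis
    using assms by (auto simp: increasing_chain_def)
qed

lemma nn_integral_power_Icc:
  fixes c H :: real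
  assumes "c \<le> H"
  shows "(\<integral>\<^sup>+y. ennreal ((H - y) ^ n) * indicator {c..H} y \<partial>lborel) = ennreal ((H - c) ^ Suc n / Suc n)"
proof -
  have "((\<lambda>y. - ((H - y) ^ Suc n / Suc n)) has_real_derivative (H - y) ^ n) (at y)" for y
    by (rule derivative_eq_intros refl | simp)+
  then show ?thesis
    using assms by (subst nn_integral_FTC_Icc) auto
qed

lemma nn_integral_uniform_chain_prob:
  assumes LH: "L < H" and P[measurable]: "Measurable.pred borel P"
    and P_lo: "\<forall>z\<in>{L..H}. P z \<longleftrightarrow> lo < z"
  shows "(\<integral>\<^sup>+y. indicator {z. P z} y * ennreal (uniform_chain_prob L H n (max lo y))
            \<partial>uniform_measure lborel {L..H})
       = ennreal (uniform_chain_prob L H (Suc n) lo)"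
proof (cases "lo < H")
  case True
  define c where "c = max lo L"
  define \<kappa> where "\<kappa> = 1 / ((H - L) ^ n * fact n)"
  have cH: "c \<le> H" using True LH by (simp add: c_def)
  have "(\<integral>\<^sup>+y. indicator {z. P z} y * ennreal (uniform_chain_prob L H n (max lo y))
            \<partial>uniform_measure lborel {L..H})
      = (\<integral>\<^sup>+y. indicator {z. P z} y * ennreal (uniform_chain_prob L H n (max lo y))
            * indicator {L..H} y \<partial>lborel) / ennreal (H - L)"
    using LH by (subst nn_integral_uniform_measure) (auto simp: uniform_chain_prob_def)
  also have "(\<integral>\<^sup>+y. indicator {z. P z} y * ennreal (uniform_chain_prob L H n (max lo y))
            * indicator {L..H} y \<partial>lborel)
      = (\<integral>\<^sup>+y. ennreal \<kappa> * (ennreal ((H - y) ^ n) * indicator {c..H} y) \<partial>lborel)"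
  proof (rule nn_integral_cong_AE)
    show "AE y in lborel. indicator {z. P z} y * ennreal (uniform_chain_prob L H n (max lo y))
            * indicator {L..H} y = ennreal \<kappa> * (ennreal ((H - y) ^ n) * indicator {c..H} y)"
      using AE_lborel_singleton[of c]
    proof eventually_elim
      case (elim y)
      show ?case
      proof (cases "y \<in> {c..H}")
        case True
        then have "y \<in> {L..H}" "lo < y" "P y" using elim P_lo by (auto simp: c_def)
        then show ?thesis
          using True LH by (simp add: uniform_chain_prob_def \<kappa>_def ennreal_mult[symmetric])
      next
        case False
        then have "\<not> (y \<in> {L..H} \<and> P y)" using P_lo by (auto simp: c_def)
        then show ?thesis using False by (auto simp: indicator_def)
      qed
    qed
  qed
  also have "\<dots> = ennreal \<kappa> * ennreal ((H - c) ^ Suc n / Suc n)"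
    by (simp add: nn_integral_cmult nn_integral_power_Icc[OF cH])
  also have "\<dots> / ennreal (H - L) = ennreal (\<kappa> * ((H - c) ^ Suc n / Suc n) / (H - L))"
    using LH cH by (simp add: \<kappa>_def ennreal_mult[symmetric] divide_ennreal)
  also have "\<kappa> * ((H - c) ^ Suc n / Suc n) / (H - L) = uniform_chain_prob L H (Suc n) lo"
    using cH by (simp add: \<kappa>_def c_def uniform_chain_prob_def)
  finally show ?thesis .
next
  case False
  then have "indicator {z. P z} y * ennreal (uniform_chain_prob L H n (max lo y)) = 0"
    if "y \<in> {L..H}" for y
    using that P_lo by auto
  then have "(\<integral>\<^sup>+y. indicator {z. P z} y * ennreal (uniform_chain_prob L H n (max lo y))
            \<partial>uniform_measure lborel {L..H}) = 0"
    by (subst nn_integral_0_iff_AE) (auto intro!: AE_uniform_measureI simp: uniform_chain_prob_def)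
  then show ?thesis using False by (simp add: uniform_chain_prob_def)
qed

text \<open>The constraint \<open>P\<close> need only agree with \<open>lo < _\<close> on \<open>[L, H]\<close>: the induction step
  strengthens it to \<open>P z \<and> y < z\<close>, and the order event itself has \<open>P = (\<lambda>_. True)\<close>.\<close>
lemma emeasure_uniform_increasing_chain:
  assumes LH: "L < H" and "distinct xs" and "Measurable.pred borel P"
    and "\<forall>z\<in>{L..H}. P z \<longleftrightarrow> lo < z"
  shows "emeasure (PiM (set xs) (\<lambda>_. uniform_measure lborel {L..H})) (increasing_chain xs P)
       = ennreal (uniform_chain_prob L H (length xs) lo)"
  using assms(2-)
proof (induction xs arbitrary: P lo)
  case Nil
  have "increasing_chain [] P = {\<lambda>_. undefined}"
    by (auto simp: increasing_chain_def)
  then show ?case by (simp add: uniform_chain_prob_def)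
next
  case (Cons j ys)
  let ?U = "uniform_measure lborel {L..H}" and ?A = "set ys"
  have "prob_space ?U"
    using LH by (intro prob_space_uniform_measure) auto
  then interpret product_sigma_finite "\<lambda>_. ?U"
    by (simp add: product_sigma_finite_def prob_space_imp_sigma_finite)
  note Cons.prems(2)[measurable]
  have j: "j \<notin> ?A" "distinct ys" using Cons.prems(1) by auto
  have chain_sets: "increasing_chain xs Q \<in> sets (PiM (set xs) (\<lambda>_. ?U))"
    if "Measurable.pred borel Q" for xs Q
    using increasing_chain_sets[of "\<lambda>_. ?U", OF _ that] by simp
  have IH: "emeasure (PiM ?A (\<lambda>_. ?U)) (increasing_chain ys (\<lambda>z. P z \<and> y < z))
      = ennreal (uniform_chain_prob L H (length ys) (max lo y))" for y
    using Cons.prems(3) by (intro Cons.IH j) auto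
  have "emeasure (PiM (insert j ?A) (\<lambda>_. ?U)) (increasing_chain (j # ys) P)
      = (\<integral>\<^sup>+y. \<integral>\<^sup>+x. indicator (increasing_chain (j # ys) P) (x(j := y)) \<partial>PiM ?A (\<lambda>_. ?U) \<partial>?U)"
    using chain_sets[of P "j # ys"] j
    by (simp add: product_nn_integral_insert_rev flip: nn_integral_indicator)
  also have "\<dots> = (\<integral>\<^sup>+y. \<integral>\<^sup>+x. indicator {z. P z} y * indicator (increasing_chain ys (\<lambda>z. P z \<and> y < z)) x
                     \<partial>PiM ?A (\<lambda>_. ?U) \<partial>?U)"
    using j by (intro nn_integral_cong) (simp add: space_PiM fun_upd_in_increasing_chain_Cons
        split: split_indicator)
  also have "\<dots> = (\<integral>\<^sup>+y. indicator {z. P z} y * ennreal (uniform_chain_prob L H (length ys) (max lo y)) \<partial>?U)"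
    using chain_sets by (simp add: nn_integral_cmult IH)
  also have "\<dots> = ennreal (uniform_chain_prob L H (length (j # ys)) lo)"
    using Cons.prems(3) by (simp add: nn_integral_uniform_chain_prob[OF LH])
  finally show ?case by simp
qed

lemma sorted_wrt_map_upt_iff:
  fixes y :: "nat \<Rightarrow> real"
  shows "sorted_wrt (<) (map y [1..<Suc k]) \<longleftrightarrow> (\<forall>i\<in>{1..<k}. y i < y (Suc i))"
proof -
  have "sorted_wrt (<) (map y [1..<Suc k]) \<longleftrightarrow> (\<forall>i. Suc i < k \<longrightarrow> y (Suc i) < y (Suc (Suc i)))"
    by (simp add: sorted_wrt_iff_nth_Suc_transp transp_def nth_map del: upt_Suc)
  also have "\<dots> \<longleftrightarrow> (\<forall>i\<in>{1..<k}. y i < y (Suc i))"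
  proof
    assume steps: "\<forall>i. Suc i < k \<longrightarrow> y (Suc i) < y (Suc (Suc i))"
    show "\<forall>i\<in>{1..<k}. y i < y (Suc i)"
    proof
      fix i assume "i \<in> {1..<k}"
      then obtain j where "i = Suc j" "Suc j < k" by (cases i) auto
      then show "y i < y (Suc i)" using steps by simp
    qed
  qed auto
  finally show ?thesis .
qed

lemma borel_measurable_cdens[measurable]:
  assumes [measurable]: "g \<in> borel_measurable borel"
  shows "cdens g M m \<in> borel_measurable borel"
  unfolding cdens_def Iint_def by simp

lemma pmass_bounds:
  fixes g :: "real \<Rightarrow> real"
  assumes g[measurable]: "g \<in> borel_measurable borel" and e: "0 < eps m"
    and bounds: "\<And>x. x \<in> Iint M m \<Longrightarrow> lo \<le> g x \<and> g x \<le> hi"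
  shows "2 * eps m * lo \<le> pmass g M m" and "pmass g M m \<le> 2 * eps m * hi"
proof -
  have I: "Iint M m = {M - eps m..M + eps m}" by (simp add: Iint_def)
  have g_int: "set_integrable lborel (Iint M m) g"
    unfolding set_integrable_def I
  proof (rule integrableI_bounded_set_indicator[where B = "max \<bar>lo\<bar> \<bar>hi\<bar>"])
    show "AE x\<in>{M - eps m..M + eps m} in lborel. norm (g x) \<le> max \<bar>lo\<bar> \<bar>hi\<bar>"
      using bounds by (intro AE_I2) (force simp: I)
  qed (simp_all add: emeasure_lborel_Icc_eq)
  have const_int: "set_integrable lborel (Iint M m) (\<lambda>_. C)" for C :: real
    unfolding set_integrable_def I by (rule integrable_indicator) (auto simp: emeasure_lborel_Icc_eq)
  have const_integral: "(LINT x:Iint M m|lborel. C) = 2 * eps m * C" for C :: real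
    using e by (subst set_integral_const) (auto simp: I emeasure_lborel_Icc_eq)
  have "(LINT x:Iint M m|lborel. lo) \<le> pmass g M m"
    unfolding pmass_def using bounds by (intro set_integral_mono g_int const_int) auto
  then show "2 * eps m * lo \<le> pmass g M m"
    by (simp add: const_integral)
  have "pmass g M m \<le> (LINT x:Iint M m|lborel. hi)"
    unfolding pmass_def using bounds by (intro set_integral_mono g_int const_int) auto
  then show "pmass g M m \<le> 2 * eps m * hi"
    by (simp add: const_integral)
qed

lemma cdens_bounds:
  fixes g :: "real \<Rightarrow> real" and \<delta> gM :: real
  assumes g: "g \<in> borel_measurable borel" and e: "0 < eps m" and gM: "0 < gM"
    and \<delta>: "0 \<le> \<delta>" "\<delta> < 1"
    and close: "\<And>x. x \<in> Iint M m \<Longrightarrow> \<bar>g x - gM\<bar> \<le> \<delta> * gM"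
  shows "(1 - \<delta>) / (1 + \<delta>) * (indicator (Iint M m) x / (2 * eps m)) \<le> cdens g M m x"
    and "cdens g M m x \<le> (1 + \<delta>) / (1 - \<delta>) * (indicator (Iint M m) x / (2 * eps m))"
proof -
  let ?e = "eps m" and ?p = "pmass g M m"
  have g_bounds: "(1 - \<delta>) * gM \<le> g y \<and> g y \<le> (1 + \<delta>) * gM" if "y \<in> Iint M m" for y
    using close[OF that] by (auto simp: abs_le_iff algebra_simps)
  have p_low: "2 * ?e * ((1 - \<delta>) * gM) \<le> ?p" and p_up: "?p \<le> 2 * ?e * ((1 + \<delta>) * gM)"
    using pmass_bounds[OF g e g_bounds] by auto
  have pos: "0 < (1 - \<delta>) * gM"
    using gM \<delta> by simp
  have p_pos: "0 < ?p"
    using p_low pos e by (smt (verit) mult_pos_pos)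
  show "(1 - \<delta>) / (1 + \<delta>) * (indicator (Iint M m) x / (2 * ?e)) \<le> cdens g M m x"
  proof (cases "x \<in> Iint M m")
    case True
    have "(1 - \<delta>) / (1 + \<delta>) * (1 / (2 * ?e)) = ((1 - \<delta>) * gM) / (2 * ?e * ((1 + \<delta>) * gM))"
      using e gM \<delta> by (simp add: divide_simps)
    also have "\<dots> \<le> g x / ?p"
      using g_bounds[OF True] pos p_pos p_up by (intro frac_le) auto
    finally show ?thesis
      using True by (simp add: cdens_def)
  qed (simp add: cdens_def)
  show "cdens g M m x \<le> (1 + \<delta>) / (1 - \<delta>) * (indicator (Iint M m) x / (2 * ?e))"
  proof (cases "x \<in> Iint M m")
    case True
    have "g x / ?p \<le> ((1 + \<delta>) * gM) / (2 * ?e * ((1 - \<delta>) * gM))"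
      using g_bounds[OF True] pos p_low gM \<delta> e by (intro frac_le) auto
    also have "\<dots> = (1 + \<delta>) / (1 - \<delta>) * (1 / (2 * ?e))"
      using e gM \<delta> by (simp add: divide_simps)
    finally show ?thesis
      using True by (simp add: cdens_def)
  qed (simp add: cdens_def)
qed

lemma map_permutes_upt:
  assumes "\<rho> permutes {1..k}"
  shows "set (map \<rho> [1..<Suc k]) = {1..k}" and "distinct (map \<rho> [1..<Suc k])"
    and "length (map \<rho> [1..<Suc k]) = k"
  using permutes_image[OF assms] permutes_inj[OF assms]
  by (simp_all add: atLeastLessThanSuc_atLeastAtMost distinct_map inj_on_subset[of \<rho> UNIV]
      del: upt_Suc)

lemma increasing_chain_permutes:
  assumes "\<rho> permutes {1..k}"
  shows "increasing_chain (map \<rho> [1..<Suc k]) (\<lambda>_. True)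
       = {x \<in> PiE {1..k} (\<lambda>_. UNIV). \<forall>i\<in>{1..<k}. x (\<rho> i) < x (\<rho> (Suc i))}"
proof -
  have "sorted_wrt (<) (map x (map \<rho> [1..<Suc k])) \<longleftrightarrow> (\<forall>i\<in>{1..<k}. x (\<rho> i) < x (\<rho> (Suc i)))"
    for x :: "nat \<Rightarrow> real"
    using sorted_wrt_map_upt_iff[of "\<lambda>i. x (\<rho> i)" k] by (simp add: comp_def del: upt_Suc)
  then show ?thesis
    unfolding increasing_chain_def map_permutes_upt(1)[OF assms] by simp
qed

lemma emeasure_uniform_increasing_chain_permutes:
  assumes "L < H" and "\<rho> permutes {1..k}"
  shows "emeasure (PiM {1..k} (\<lambda>_. uniform_measure lborel {L..H}))
           (increasing_chain (map \<rho> [1..<Suc k]) (\<lambda>_. True)) = ennreal (1 / fact k)"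
proof -
  note xs = map_permutes_upt[OF assms(2)]
  have "emeasure (PiM {1..k} (\<lambda>_. uniform_measure lborel {L..H}))
          (increasing_chain (map \<rho> [1..<Suc k]) (\<lambda>_. True))
      = ennreal (uniform_chain_prob L H k (L - 1))"
    using emeasure_uniform_increasing_chain[OF assms(1) xs(2), of "\<lambda>_. True" "L - 1"]
    by (simp only: xs) simp
  then show ?thesis
    using assms(1) by (simp add: uniform_chain_prob_def)
qed

lemma order_prob_bounds:
  fixes a b :: real
  assumes e: "0 < eps m" and ab: "0 \<le> a" "0 \<le> b" and \<rho>: "\<rho> permutes {1..k}"
    and meas: "\<And>i. i \<in> {1..k} \<Longrightarrow> f (th i) \<in> borel_measurable borel"
    and lower: "\<And>i x. i \<in> {1..k} \<Longrightarrow>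
                  a * (indicator (Iint M m) x / (2 * eps m)) \<le> cdens (f (th i)) M m x"
    and upper: "\<And>i x. i \<in> {1..k} \<Longrightarrow>
                  cdens (f (th i)) M m x \<le> b * (indicator (Iint M m) x / (2 * eps m))"
  shows "a ^ k / fact k \<le> order_prob f M m k th \<rho>" and "order_prob f M m k th \<rho> \<le> b ^ k / fact k"
proof -
  define u where "u x = ennreal (indicator (Iint M m) x / (2 * eps m))" for x
  define g where "g i = (\<lambda>x. ennreal (cdens (f (th i)) M m x))" for i
  define T where "T = increasing_chain (map \<rho> [1..<Suc k]) (\<lambda>_. True)"
  let ?P = "joint_law f M m k th" and ?U = "PiM {1..k} (\<lambda>_. density lborel u)"
  have P: "?P = PiM {1..k} (\<lambda>i. density lborel (g i))"
    by (simp add: joint_law_def g_def)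
  have u_uniform: "density lborel u = uniform_measure lborel {M - eps m..M + eps m}"
    unfolding uniform_measure_def u_def Iint_def using e divide_ennreal[of 1 "2 * eps m"]
    by (intro density_cong) (auto split: split_indicator)
  have u_meas: "u \<in> borel_measurable borel"
    unfolding u_def Iint_def by simp
  have g_meas: "g i \<in> borel_measurable borel" if "i \<in> {1..k}" for i
    using meas[OF that] unfolding g_def by measurable
  have lower': "ennreal a * u x \<le> 1 * g i x" and upper': "1 * g i x \<le> ennreal b * u x"
    if "i \<in> {1..k}" for i x
    using lower[OF that, of x] upper[OF that, of x] ab e
    by (simp_all add: u_def g_def ennreal_mult[symmetric] ennreal_leI)
  have T_sets: "T \<in> sets (PiM {1..k} (\<lambda>i. density lborel (g i)))"
    using increasing_chain_sets[of "\<lambda>i. density lborel (g i)" "\<lambda>_. True" "map \<rho> [1..<Suc k]"]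
    unfolding T_def map_permutes_upt(1)[OF \<rho>] by simp
  have order_T: "order_prob f M m k th \<rho> = measure ?P T"
    unfolding order_prob_def T_def increasing_chain_permutes[OF \<rho>] by (simp add: P space_PiM)
  have U_T: "emeasure ?U T = ennreal (1 / fact k)"
    unfolding T_def u_uniform using e by (intro emeasure_uniform_increasing_chain_permutes \<rho>) simp
  have "ennreal a ^ card {1..k} * emeasure ?U T \<le> 1 ^ card {1..k} * emeasure ?P T"
    unfolding P by (rule emeasure_PiM_density_mono)
      (use u_meas g_meas lower' T_sets in \<open>auto simp: u_def g_def cong: sets_PiM_cong\<close>)
  then have P_low: "ennreal (a ^ k / fact k) \<le> emeasure ?P T"
    using ab by (simp add: U_T[simplified] ennreal_mult[symmetric] ennreal_power)
  have "1 ^ card {1..k} * emeasure ?P T \<le> ennreal b ^ card {1..k} * emeasure ?U T"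
    unfolding P by (rule emeasure_PiM_density_mono)
      (use u_meas g_meas upper' T_sets in \<open>auto simp: u_def g_def\<close>)
  then have P_up: "emeasure ?P T \<le> ennreal (b ^ k / fact k)"
    using ab by (simp add: U_T[simplified] ennreal_mult[symmetric] ennreal_power)
  then have "emeasure ?P T = ennreal (measure ?P T)"
    by (intro emeasure_eq_ennreal_measure) (auto simp: top_unique)
  then show "a ^ k / fact k \<le> order_prob f M m k th \<rho>"
    and "order_prob f M m k th \<rho> \<le> b ^ k / fact k"
    using P_low P_up ab by (simp_all add: order_T)
qed

lemma ratio_power_bounds:
  fixes \<delta> :: real and k :: nat
  assumes \<delta>: "0 \<le> \<delta>" "\<delta> \<le> 1/2" and k: "real k * \<delta> \<le> 1/8"
  shows "1 - 8 * real k * \<delta> \<le> ((1 - \<delta>) / (1 + \<delta>)) ^ k"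
    and "((1 + \<delta>) / (1 - \<delta>)) ^ k \<le> 1 + 8 * real k * \<delta>"
proof -
  have \<delta>\<delta>: "0 \<le> \<delta> * \<delta>" "\<delta> * \<delta> \<le> \<delta> / 2"
    using mult_left_mono[OF \<delta>(2,1)] \<delta> by auto
  have "1 - 8 * real k * \<delta> \<le> 1 + real k * (- 2 * \<delta>)"
    using \<delta> by simp
  also have "\<dots> \<le> (1 + (- 2 * \<delta>)) ^ k"
    using \<delta> by (intro Bernoulli_inequality) simp
  also have "\<dots> \<le> ((1 - \<delta>) / (1 + \<delta>)) ^ k"
  proof (rule power_mono)
    have "(1 - 2 * \<delta>) * (1 + \<delta>) \<le> 1 - \<delta>"
      using \<delta>\<delta> by (simp add: algebra_simps)
    then show "1 + - 2 * \<delta> \<le> (1 - \<delta>) / (1 + \<delta>)"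
      using \<delta> by (simp add: pos_le_divide_eq)
  qed (use \<delta> in simp)
  finally show "1 - 8 * real k * \<delta> \<le> ((1 - \<delta>) / (1 + \<delta>)) ^ k" .
  have "((1 + \<delta>) / (1 - \<delta>)) ^ k \<le> (1 + 4 * \<delta>) ^ k"
  proof (rule power_mono)
    have "1 + \<delta> \<le> (1 + 4 * \<delta>) * (1 - \<delta>)"
      using \<delta>\<delta> by (simp add: algebra_simps)
    then show "(1 + \<delta>) / (1 - \<delta>) \<le> 1 + 4 * \<delta>"
      using \<delta> by (simp add: pos_divide_le_eq)
  qed (use \<delta> in simp)
  also have "\<dots> \<le> exp (4 * \<delta>) ^ k"
    using \<delta> by (intro power_mono) (auto simp: exp_ge_add_one_self)
  also have "\<dots> = exp (4 * (real k * \<delta>))"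
    by (simp add: exp_of_nat_mult[symmetric] ac_simps)
  also have "\<dots> \<le> 1 + 2 * (4 * (real k * \<delta>))"
    using exp_bound_lemma[of "4 * (real k * \<delta>)"] k \<delta> by simp
  finally show "((1 + \<delta>) / (1 - \<delta>)) ^ k \<le> 1 + 8 * real k * \<delta>"
    by simp
qed

lemma order_prob_deviation:
  fixes \<delta> :: real and k :: nat
  assumes e: "0 < eps m" and \<delta>: "0 \<le> \<delta>" "\<delta> \<le> 1/2" and k: "real k * \<delta> \<le> 1/8"
    and \<rho>: "\<rho> permutes {1..k}"
    and meas: "\<And>i. i \<in> {1..k} \<Longrightarrow> f (th i) \<in> borel_measurable borel"
    and pos: "\<And>i. i \<in> {1..k} \<Longrightarrow> 0 < f (th i) M"
    and close: "\<And>i x. i \<in> {1..k} \<Longrightarrow> x \<in> Iint M m \<Longrightarrow> \<bar>f (th i) x - f (th i) M\<bar> \<le> \<delta> * f (th i) M"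
  shows "\<bar>order_prob f M m k th \<rho> - 1 / fact k\<bar> \<le> 8 * real k * \<delta> / fact k"
proof -
  let ?P = "order_prob f M m k th \<rho>"
  have dens: "(1 - \<delta>) / (1 + \<delta>) * (indicator (Iint M m) x / (2 * eps m)) \<le> cdens (f (th i)) M m x"
    "cdens (f (th i)) M m x \<le> (1 + \<delta>) / (1 - \<delta>) * (indicator (Iint M m) x / (2 * eps m))"
    if i: "i \<in> {1..k}" for i x
    using cdens_bounds[OF meas[OF i] e pos[OF i] \<delta>(1) _ close[OF i]] \<delta> by auto
  have lower: "((1 - \<delta>) / (1 + \<delta>)) ^ k / fact k \<le> ?P"
    by (rule order_prob_bounds(1)[where b = "(1 + \<delta>) / (1 - \<delta>)", OF e _ _ \<rho>])
      (use \<delta> meas dens in auto)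
  have upper: "?P \<le> ((1 + \<delta>) / (1 - \<delta>)) ^ k / fact k"
    by (rule order_prob_bounds(2)[where a = "(1 - \<delta>) / (1 + \<delta>)", OF e _ _ \<rho>])
      (use \<delta> meas dens in auto)
  have "?P - 1 / fact k \<le> (((1 + \<delta>) / (1 - \<delta>)) ^ k - 1) / fact k"
    using upper by (simp add: diff_divide_distrib)
  also have "\<dots> \<le> 8 * real k * \<delta> / fact k"
    using ratio_power_bounds(2)[OF \<delta> k] by (intro divide_right_mono) auto
  finally have "?P - 1 / fact k \<le> 8 * real k * \<delta> / fact k" .
  moreover have "1 / fact k - ?P \<le> (1 - ((1 - \<delta>) / (1 + \<delta>)) ^ k) / fact k"
    using lower by (simp add: diff_divide_distrib)
  moreover have "\<dots> \<le> 8 * real k * \<delta> / fact k"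
    using ratio_power_bounds(1)[OF \<delta> k] by (intro divide_right_mono) auto
  ultimately show ?thesis
    by (simp add: abs_le_iff)
qed

lemma finite_positive_lower_bound:
  fixes h :: "'a \<Rightarrow> real"
  assumes "finite A" and "\<And>t. t \<in> A \<Longrightarrow> 0 < h t"
  obtains \<epsilon> where "0 < \<epsilon>" and "\<And>t. t \<in> A \<Longrightarrow> \<epsilon> \<le> h t"
proof
  show "0 < Min (insert 1 (h ` A))"
    using assms by (subst Min_gr_iff) auto
  show "Min (insert 1 (h ` A)) \<le> h t" if "t \<in> A" for t
    using assms that by (intro Min_le) auto
qed

lemma eps_square_mult_powr:
  assumes "0 < m"
  shows "eps m ^ 2 * real m powr (5/8) = real m powr (-1/8)"
  using assms by (simp add: eps_def powr_powr flip: powr_realpow powr_add)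

lemma relative_deviation_on_Iint:
  fixes g :: "real \<Rightarrow> real"
  assumes "eps m \<le> eps1" and "0 < fmin" "fmin \<le> g M" and "0 \<le> c"
    and smooth: "\<And>x. x \<in> {M - eps1 .. M + eps1} \<Longrightarrow> \<bar>g x - g M\<bar> \<le> c * (x - M)\<^sup>2"
    and x: "x \<in> Iint M m"
  shows "\<bar>g x - g M\<bar> \<le> c * eps m ^ 2 / fmin * g M"
proof -
  have "\<bar>x - M\<bar> \<le> eps m"
    using x by (auto simp: Iint_def)
  then have "(x - M)\<^sup>2 \<le> eps m ^ 2" and "x \<in> {M - eps1 .. M + eps1}"
    using power_mono[of "\<bar>x - M\<bar>" "eps m" 2] \<open>eps m \<le> eps1\<close> by (auto simp: abs_le_iff)
  then have "\<bar>g x - g M\<bar> \<le> c * eps m ^ 2"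
    using smooth \<open>0 \<le> c\<close> by (meson mult_left_mono order.trans)
  also have "\<dots> = c * eps m ^ 2 / fmin * fmin"
    using \<open>0 < fmin\<close> by simp
  also have "\<dots> \<le> c * eps m ^ 2 / fmin * g M"
    using assms by (intro mult_left_mono) auto
  finally show ?thesis .
qed

lemma eventually_small_scale:
  fixes c fmin K eps1 :: real
  assumes "0 < eps1" and "0 < fmin"
  shows "\<forall>\<^sub>F m in sequentially. 0 < m \<and> eps m \<le> eps1 \<and> c * eps m ^ 2 / fmin \<le> 1/2
           \<and> K * real m powr (-1/8) \<le> 1/8"
proof -
  have eps_0: "(\<lambda>m. eps m) \<longlonglongrightarrow> 0"
    unfolding eps_def by real_asymp
  then have \<delta>_0: "(\<lambda>m. c * eps m ^ 2 / fmin) \<longlonglongrightarrow> 0"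
    using assms(2) by (auto intro!: tendsto_eq_intros)
  have K_0: "(\<lambda>m. K * real m powr (-1/8)) \<longlonglongrightarrow> 0"
    by real_asymp
  have half: "(0::real) < 1/2" and eighth: "(0::real) < 1/8"
    by simp_all
  show ?thesis
    using eventually_gt_at_top[of 0] order_tendstoD(2)[OF eps_0 assms(1)]
      order_tendstoD(2)[OF \<delta>_0 half] order_tendstoD(2)[OF K_0 eighth]
    by eventually_elim auto
qed

lemma order_prob_deviation_powr_bound:
  fixes f :: "nat \<Rightarrow> real \<Rightarrow> real" and c fmin A eps1 :: real
  assumes meas: "\<And>t. t \<in> {1..r} \<Longrightarrow> f t \<in> borel_measurable borel"
    and fmin: "0 < fmin" "\<And>t. t \<in> {1..r} \<Longrightarrow> fmin \<le> f t M" and c: "0 \<le> c"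
    and smooth: "\<And>t x. t \<in> {1..r} \<Longrightarrow> x \<in> {M - eps1 .. M + eps1} \<Longrightarrow>
                   \<bar>f t x - f t M\<bar> \<le> c * (x - M)\<^sup>2"
    and m: "0 < m" "eps m \<le> eps1" "c * eps m ^ 2 / fmin \<le> 1/2"
      "c * A / fmin * real m powr (-1/8) \<le> 1/8"
    and k: "real k \<le> A * real m powr (5/8)"
    and th: "\<forall>i\<in>{1..k}. th i \<in> {1..r}" and \<rho>: "\<rho> permutes {1..k}"
  shows "\<bar>order_prob f M m k th \<rho> - 1 / fact k\<bar>
       \<le> (8 * (c * A / fmin) + 1) * real m powr (-1/8) / fact k"
proof -
  define \<delta> where "\<delta> = c * eps m ^ 2 / fmin"
  define K where "K = c * A / fmin"
  have k\<delta>: "real k * \<delta> \<le> K * real m powr (-1/8)"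
  proof -
    have "real k * \<delta> \<le> A * real m powr (5/8) * \<delta>"
      using k c fmin by (intro mult_right_mono) (auto simp: \<delta>_def)
    also have "\<dots> = K * (eps m ^ 2 * real m powr (5/8))"
      by (simp add: K_def \<delta>_def)
    finally show ?thesis
      using m by (simp add: eps_square_mult_powr)
  qed
  have "\<bar>order_prob f M m k th \<rho> - 1 / fact k\<bar> \<le> 8 * real k * \<delta> / fact k"
  proof (rule order_prob_deviation[OF _ _ _ _ \<rho>])
    show "0 < eps m" "0 \<le> \<delta>" "\<delta> \<le> 1/2"
      using m c fmin by (auto simp: eps_def \<delta>_def)
    have "K * real m powr (-1/8) \<le> 1/8"
      unfolding K_def by (rule m(4))
    then show "real k * \<delta> \<le> 1/8"
      using k\<delta> by linarith
    show "\<bar>f (th i) x - f (th i) M\<bar> \<le> \<delta> * f (th i) M" if "i \<in> {1..k}" "x \<in> Iint M m" for i x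
      unfolding \<delta>_def using th that m c fmin smooth by (intro relative_deviation_on_Iint) auto
  qed (use th meas fmin in \<open>auto intro: less_le_trans\<close>)
  also have "\<dots> \<le> (8 * K + 1) * real m powr (-1/8) / fact k"
  proof (rule divide_right_mono)
    have "(8 * K + 1) * real m powr (-1/8) = 8 * (K * real m powr (-1/8)) + real m powr (-1/8)"
      by (simp add: algebra_simps)
    then show "8 * real k * \<delta> \<le> (8 * K + 1) * real m powr (-1/8)"
      using k\<delta> powr_ge_zero[of "real m" "-1/8"] by linarith
  qed simp
  finally show ?thesis
    by (simp add: K_def)
qed

theorem lemma5:
  fixes f :: "nat \<Rightarrow> real \<Rightarrow> real" and r :: nat and M c eps1 :: real
  assumes meas: "\<And>t. t \<in> {1..r} \<Longrightarrow> f t \<in> borel_measurable borel"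
    and nonneg: "\<And>t x. t \<in> {1..r} \<Longrightarrow> f t x \<ge> 0"
    and total: "\<And>t. t \<in> {1..r} \<Longrightarrow> (\<integral>\<^sup>+ x. ennreal (f t x) \<partial>lborel) = 1"
    and posM: "\<And>t. t \<in> {1..r} \<Longrightarrow> f t M > 0"
    and c: "c \<ge> 0" and eps1: "eps1 > 0"
    and smooth: "\<And>t x. t \<in> {1..r} \<Longrightarrow> x \<in> {M - eps1 .. M + eps1} \<Longrightarrow>
                   \<bar>f t x - f t M\<bar> \<le> c * (x - M)\<^sup>2"
    and A: "A > (0::real)"
  shows "\<exists>C>0. \<exists>m0::nat. \<forall>m\<ge>m0. \<forall>k::nat. real k \<le> A * real m powr (5/8) \<longrightarrow>
           (\<forall>th. (\<forall>i\<in>{1..k}. th i \<in> {1..r}) \<longrightarrow>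
             (\<forall>\<rho>. \<rho> permutes {1..k} \<longrightarrow>
               \<bar>order_prob f M m k th \<rho> - 1 / fact k\<bar> \<le> C * real m powr (-1/8) / fact k))"
proof -
  obtain fmin where fmin: "0 < fmin" "\<And>t. t \<in> {1..r} \<Longrightarrow> fmin \<le> f t M"
    using finite_positive_lower_bound[of "{1..r}" "\<lambda>t. f t M"] posM by auto
  define K where "K = c * A / fmin"
  obtain m0 where m0: "\<And>m. m0 \<le> m \<Longrightarrow>
      0 < m \<and> eps m \<le> eps1 \<and> c * eps m ^ 2 / fmin \<le> 1/2 \<and> K * real m powr (-1/8) \<le> 1/8"
    using eventually_small_scale[OF eps1 fmin(1), of c K] by (auto simp: eventually_sequentially)
  have "0 \<le> K"
    unfolding K_def using c A fmin by (intro divide_nonneg_pos mult_nonneg_nonneg) auto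
  then have "0 < 8 * K + 1"
    by simp
  moreover have "\<bar>order_prob f M m k th \<rho> - 1 / fact k\<bar> \<le> (8 * K + 1) * real m powr (-1/8) / fact k"
    if "m0 \<le> m" "real k \<le> A * real m powr (5/8)" "\<forall>i\<in>{1..k}. th i \<in> {1..r}" "\<rho> permutes {1..k}"
    for m k th \<rho>
    unfolding K_def using m0[OF that(1)]
    by (intro order_prob_deviation_powr_bound[where r = r, OF meas fmin c smooth _ _ _ _ that(2-)])
       (auto simp: K_def)
  ultimately show ?thesis
    by blast
qed

end
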